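(* Let $f:\mathbb{R}^n\to\mathbb{R}$ be convex, continuously differentiable and locally strongly convex with locally Lipschitz gradient, with $\mathcal{X}^*:=\arg\min f\neq\emptyset$ and optimal value $f^*$. Generate the AdaSGA sequence $x^{k+1}=x^k-\alpha_k\gamma_k\nabla f(x^k)$ with parameters $x^0$, $\alpha_0>0$, $\theta_0>0$, $\tau>1$, $0<\omega\le\frac1{\sqrt2}$, $\gamma_k\in[\gamma_{\min},\gamma_{\max}]\subset(0,\infty)$, and for $k\ge1$, $L_k:=\frac{\|\nabla f(x^k)-\nabla f(x^{k-1})\|}{\|x^k-x^{k-1}\|}$, $\alpha_k:=\min\{\frac{\alpha_{k-1}\gamma_{k-1}}{\gamma_k}\sqrt{2(1-\omega^2)+\theta_{k-1}/\tau},\frac{\omega}{\gamma_kL_k}\}$, $\theta_k:=\frac{\alpha_k\gamma_k}{\alpha_{k-1}\gamma_{k-1}}$. Define $\eta,R,W,L_W,\mu_W,\hat q$ and $\tilde c_1,\tilde c_2,\tilde c_3$ by: $\eta:=\mathrm{dist}^2(x^0;\mathcal{X}^* )+2\alpha_0^2\gamma_0^2\|\nabla f(x^0)\|^2+2\alpha_0\gamma_0\theta_0(f(x^0)-f^* )$; $W:=\overline B(0;R)$ with $R>3\sqrt\eta+\mathrm{dist}(x^0;\mathcal{X}^* )+\|x^0\|$; $L_W>0$ a Lipschitz constant of $\nabla f$ on $W$; $\mu_W:=\inf_{x,y\in W,x\ne y}\frac{\langle\nabla f(y)-\nabla f(x),y-x\rangle}{\|y-x\|^2}$; $m:=\min\{\frac{\alpha_0\gamma_0\mu_W}{\omega},\frac{\mu_W}{L_W}\}$;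 $\hat q:=\min\{\frac{\mu_W}{2}\min\{\alpha_0\gamma_0,\frac{\omega}{L_W}\},\frac{\mu_W(1-\omega^2)}{2\omega^3L_W+\mu_W(1-\omega^2)},\frac{(\tau-1)m}{\tau(2(1-\omega^2)+m)}\}$; $\tilde c_1:=\sqrt{(R+\|x^0\|)^2+\eta}$, $\tilde c_2:=\frac{\omega L_W^2\tilde c_1^2}{\mu_W\min\{\alpha_0^2\gamma_0^2L_W^2,\omega^2\}}$, $\tilde c_3:=\frac{\sqrt{2\tilde c_1^2(1-\omega^2)\omega L_W^3}}{\sqrt{2\omega^2L_W+(1-\omega^2)\mu_W}\min\{\alpha_0\gamma_0L_W,\omega\}}$. Let $\varepsilon>0$ and for $a,b>0$ let $M(a,b):=\Big\lceil\frac{\log(\varepsilon^{-1})+\log a}{\log(b^{-1})}+1\Big\rceil$. Then there exists $x^*\in\mathcal{X}^*$ such that: (a) the first index $N_x(\varepsilon)$ with $\|x^k-x^*\|\le\varepsilon$ satisfies $N_x(\varepsilon)\le M(\tilde c_1,\sqrt{1-\hat q})$; (b) the first index $N_f(\varepsilon)$ with $f(x^k)-f^*\le\varepsilon$ satisfies $N_f(\varepsilon)\le M(\tilde c_2,1-\hat q)$; (c) the first index $N_{\nabla f}(\varepsilon)$ with $\|\nabla f(x^k)\|\le\varepsilon$ satisfies $N_{\nabla f}(\varepsilon)\le M(\tilde c_3,\sqrt{1-\hat q})$.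
   Context: $f$ is locally strongly convex if every $x$ has $\delta_x>0$, $\mu_x>0$ with $f(y)\ge f(z)+\langle\nabla f(z),y-z\rangle+\frac{\mu_x}{2}\|y-z\|^2$ for all $y,z\in B(x;\delta_x)$. *)

theory Defs
  imports "HOL-Analysis.Analysis"
begin

definition loc_strongly_convex :: "('a::real_inner \<Rightarrow> real) \<Rightarrow> ('a \<Rightarrow> 'a) \<Rightarrow> bool" where
  "loc_strongly_convex f g \<longleftrightarrow>
     (\<forall>x. \<exists>\<delta>>0. \<exists>\<mu>>0. \<forall>y\<in>ball x \<delta>. \<forall>z\<in>ball x \<delta>.
        f y \<ge> f z + g z \<bullet> (y - z) + \<mu> / 2 * (norm (y - z))\<^sup>2)"

definition loc_lipschitz :: "('a::metric_space \<Rightarrow> 'b::metric_space) \<Rightarrow> bool" where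
  "loc_lipschitz g \<longleftrightarrow> (\<forall>x. \<exists>\<delta>>0. \<exists>L. L-lipschitz_on (ball x \<delta>) g)"

definition argmin_set :: "('a \<Rightarrow> real) \<Rightarrow> 'a set" where
  "argmin_set f = {x. \<forall>y. f x \<le> f y}"

definition opt_val :: "('a \<Rightarrow> real) \<Rightarrow> real" where
  "opt_val f = Inf (range f)"

definition adasga_L :: "('a::real_normed_vector \<Rightarrow> 'a) \<Rightarrow> (nat \<Rightarrow> 'a) \<Rightarrow> nat \<Rightarrow> real" where
  "adasga_L g x k = norm (g (x k) - g (x (k - 1))) / norm (x k - x (k - 1))"

text \<open>AdaSGA step-size update; omega/(gamma_k L_k) is read as +infinity when L_k = 0.\<close>
definition adasga_alpha_next ::
  "real \<Rightarrow> real \<Rightarrow> real \<Rightarrow> real \<Rightarrow> real \<Rightarrow> real \<Rightarrow> real \<Rightarrow> real" where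
  "adasga_alpha_next \<omega> \<tau> a_prev g_prev th_prev g_cur L =
     (let a = a_prev * g_prev / g_cur * sqrt (2 * (1 - \<omega>\<^sup>2) + th_prev / \<tau>)
      in if L = 0 then a else min a (\<omega> / (g_cur * L)))"

definition Mbound :: "real \<Rightarrow> real \<Rightarrow> real \<Rightarrow> int" where
  "Mbound \<epsilon> a b = \<lceil>(ln (inverse \<epsilon>) + ln a) / ln (inverse b) + 1\<rceil>"

end

theory Submission
  imports Defs
begin

(*
  Progress is measured by the Lyapunov function

    E k = |x k - xs|^2 + ((t k * |grad f (x k)|)^2 + t k * theta k * (f (x k) - fstar)) / (1 - omega^2),

  where t k = alpha k * gamma k is the effective step and xs is the minimiser nearest to x 0.
  The two halves of the step-size rule, t (k+1) <= t k * sqrt (2 (1 - omega^2) + theta k / tau)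
  and t (k+1) * |grad f (x (k+1)) - grad f (x k)| <= omega * |x (k+1) - x k|, together with
  convexity make E nonincreasing, so every iterate stays within sqrt eta of xs and hence in W.
  On the compact convex set W local strong convexity becomes uniform: the gradient is
  mu_W-strongly monotone there, as well as L_W-Lipschitz.  Consequently the steps are bounded below
  by min (alpha 0 * gamma 0) (omega / L_W) and, from k = 1 on, above by omega / mu_W; combining
  strong convexity with cocoercivity at xs then gives E (k+1) <= (1 - q) * E k for k >= 1.
  The three complexity bounds follow from the resulting geometric decay of |x k - xs|, of
  f (x k) - fstar <= L_W / 2 * |x k - xs|^2 and of |grad f (x k)| <= L_W * |x k - xs|.
*)

section \<open>Gradient inequalities for differentiable convex functions\<close>

lemma has_real_derivative_along_line:
  fixes f :: "'a::real_inner \<Rightarrow> real"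
  assumes grad: "\<And>z. (f has_derivative (\<lambda>h. g z \<bullet> h)) (at z)"
  shows "((\<lambda>s. f (x + s *\<^sub>R v)) has_real_derivative (g (x + s *\<^sub>R v) \<bullet> v)) (at s)"
proof -
  have "((\<lambda>s. x + s *\<^sub>R v) has_derivative (\<lambda>h. h *\<^sub>R v)) (at s)"
    by (auto intro!: derivative_eq_intros)
  from has_derivative_compose[OF this grad]
  have "((\<lambda>s. f (x + s *\<^sub>R v)) has_derivative (\<lambda>h. h * (g (x + s *\<^sub>R v) \<bullet> v))) (at s)"
    by simp
  then show ?thesis
    by (rule has_derivative_imp_has_field_derivative) simp
qed

lemma convex_gradient_inequality:
  fixes f :: "'a::real_inner \<Rightarrow> real"
  assumes conv: "convex_on UNIV f"
    and grad: "\<And>z. (f has_derivative (\<lambda>h. g z \<bullet> h)) (at z)"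
  shows "f x + g x \<bullet> (y - x) \<le> f y"
proof -
  let ?p = "\<lambda>s. f (x + s *\<^sub>R (y - x))"
  have "convex_on UNIV ?p"
  proof (rule convex_onI)
    fix t a b :: real assume t: "0 < t" "t < 1"
    have "x + ((1 - t) *\<^sub>R a + t *\<^sub>R b) *\<^sub>R (y - x)
        = (1 - t) *\<^sub>R (x + a *\<^sub>R (y - x)) + t *\<^sub>R (x + b *\<^sub>R (y - x))"
      by (simp add: algebra_simps)
    then show "?p ((1 - t) *\<^sub>R a + t *\<^sub>R b) \<le> (1 - t) * ?p a + t * ?p b"
      using convex_onD[OF conv, of t "x + a *\<^sub>R (y - x)" "x + b *\<^sub>R (y - x)"] t by simp
  qed simp
  moreover have "(?p has_real_derivative (g x \<bullet> (y - x))) (at 0 within UNIV)"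
    using has_real_derivative_along_line[OF grad, of x "y - x" 0] by simp
  ultimately have "g x \<bullet> (y - x) * (1 - 0) \<le> ?p 1 - ?p 0"
    by (intro convex_on_imp_above_tangent) auto
  then show ?thesis by simp
qed

lemma convex_gradient_monotone:
  fixes f :: "'a::real_inner \<Rightarrow> real"
  assumes conv: "convex_on UNIV f"
    and grad: "\<And>z. (f has_derivative (\<lambda>h. g z \<bullet> h)) (at z)"
  shows "0 \<le> (g y - g x) \<bullet> (y - x)"
  using convex_gradient_inequality[OF conv grad, of x y] convex_gradient_inequality[OF conv grad, of y x]
  by (simp add: inner_diff_left inner_diff_right)

lemma quadratic_lower_bound_of_gradient_growth:
  fixes f :: "'a::real_inner \<Rightarrow> real"
  assumes grad: "\<And>z. (f has_derivative (\<lambda>h. g z \<bullet> h)) (at z)"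
    and growth: "\<And>s. 0 \<le> s \<Longrightarrow> s \<le> 1 \<Longrightarrow>
      c * s * (norm (y - x))\<^sup>2 \<le> (g (x + s *\<^sub>R (y - x)) - g x) \<bullet> (y - x)"
  shows "f x + g x \<bullet> (y - x) + c / 2 * (norm (y - x))\<^sup>2 \<le> f y"
proof -
  let ?p = "\<lambda>s. f (x + s *\<^sub>R (y - x)) - s * (g x \<bullet> (y - x)) - c / 2 * s\<^sup>2 * (norm (y - x))\<^sup>2"
  have "?p 0 \<le> ?p 1"
  proof (rule DERIV_nonneg_imp_nondecreasing[of 0 1])
    fix s :: real assume s: "0 \<le> s" "s \<le> 1"
    have "(?p has_real_derivative (g (x + s *\<^sub>R (y - x)) \<bullet> (y - x) - 1 * (g x \<bullet> (y - x))
          - c / 2 * (2 * s) * (norm (y - x))\<^sup>2)) (at s)"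
      by (rule derivative_eq_intros has_real_derivative_along_line[OF grad] | simp)+
    moreover have "0 \<le> g (x + s *\<^sub>R (y - x)) \<bullet> (y - x) - 1 * (g x \<bullet> (y - x))
          - c / 2 * (2 * s) * (norm (y - x))\<^sup>2"
      using growth[OF s] by (simp add: inner_diff_left)
    ultimately show "\<exists>d. (?p has_real_derivative d) (at s) \<and> 0 \<le> d" by blast
  qed simp
  then show ?thesis by simp
qed

lemma strongly_monotone_imp_strong_convexity_inequality:
  fixes f :: "'a::real_inner \<Rightarrow> real"
  assumes grad: "\<And>z. (f has_derivative (\<lambda>h. g z \<bullet> h)) (at z)"
    and W: "convex W"
    and mono: "\<And>y z. y \<in> W \<Longrightarrow> z \<in> W \<Longrightarrow> \<mu> * (norm (y - z))\<^sup>2 \<le> (g y - g z) \<bullet> (y - z)"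
    and y: "y \<in> W" and z: "z \<in> W"
  shows "f z + g z \<bullet> (y - z) + \<mu> / 2 * (norm (y - z))\<^sup>2 \<le> f y"
proof (rule quadratic_lower_bound_of_gradient_growth[OF grad])
  fix s :: real assume s: "0 \<le> s" "s \<le> 1"
  let ?p = "z + s *\<^sub>R (y - z)"
  have "?p = (1 - s) *\<^sub>R z + s *\<^sub>R y" by (simp add: algebra_simps)
  then have "?p \<in> W" using convexD_alt[OF W z y] s by simp
  from mono[OF this z]
  have "\<mu> * (norm (s *\<^sub>R (y - z)))\<^sup>2 \<le> (g ?p - g z) \<bullet> (s *\<^sub>R (y - z))"
    by simp
  then have "\<mu> * (s * norm (y - z))\<^sup>2 \<le> s * ((g ?p - g z) \<bullet> (y - z))"
    using s by (simp only: norm_scaleR inner_scaleR_right abs_of_nonneg)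
  then have "s * (\<mu> * s * (norm (y - z))\<^sup>2) \<le> s * ((g ?p - g z) \<bullet> (y - z))"
    by (simp add: power2_eq_square mult_ac)
  then show "\<mu> * s * (norm (y - z))\<^sup>2 \<le> (g ?p - g z) \<bullet> (y - z)"
    using s by (cases "s = 0") auto
qed

lemma lipschitz_gradient_descent_inequality:
  fixes f :: "'a::real_inner \<Rightarrow> real"
  assumes grad: "\<And>z. (f has_derivative (\<lambda>h. g z \<bullet> h)) (at z)"
    and W: "convex W" and lip: "L-lipschitz_on W g"
    and y: "y \<in> W" and z: "z \<in> W"
  shows "f y \<le> f z + g z \<bullet> (y - z) + L / 2 * (norm (y - z))\<^sup>2"
proof -
  have "((\<lambda>x. - f x) has_derivative (\<lambda>h. (- g x) \<bullet> h)) (at x)" for x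
    using has_derivative_minus[OF grad[of x]] by simp
  then have "- f z + (- g z) \<bullet> (y - z) + (- L) / 2 * (norm (y - z))\<^sup>2 \<le> - f y"
  proof (rule quadratic_lower_bound_of_gradient_growth)
    fix s :: real assume s: "0 \<le> s" "s \<le> 1"
    let ?p = "z + s *\<^sub>R (y - z)"
    have "?p = (1 - s) *\<^sub>R z + s *\<^sub>R y" by (simp add: algebra_simps)
    then have "?p \<in> W" using convexD_alt[OF W z y] s by simp
    then have "norm (g ?p - g z) \<le> L * norm (?p - z)"
      using lipschitz_onD[OF lip _ z] unfolding dist_norm by blast
    also have "\<dots> = L * s * norm (y - z)"
      using s by simp
    finally have "norm (g ?p - g z) \<le> L * s * norm (y - z)" .
    then have "(g ?p - g z) \<bullet> (y - z) \<le> L * s * (norm (y - z))\<^sup>2"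
      using norm_cauchy_schwarz[of "g ?p - g z" "y - z"] mult_right_mono[of _ _ "norm (y - z)"]
      by (force simp: power2_eq_square)
    then show "- L * s * (norm (y - z))\<^sup>2 \<le> (- g ?p - - g z) \<bullet> (y - z)"
      by (simp add: inner_diff_left)
  qed
  then show ?thesis by simp
qed

text \<open>Evaluating the descent inequality at \<open>xs + g y / L\<close> rather than at \<open>y\<close> is what
  produces the gradient term.\<close>
lemma cocoercivity_at_stationary_point:
  fixes f :: "'a::real_inner \<Rightarrow> real"
  assumes conv: "convex_on UNIV f"
    and grad: "\<And>z. (f has_derivative (\<lambda>h. g z \<bullet> h)) (at z)"
    and W: "convex W" and lip: "L-lipschitz_on W g" and L: "L > 0"
    and xs: "xs \<in> W" and stationary: "g xs = 0" and zW: "xs + (1 / L) *\<^sub>R g y \<in> W"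
  shows "f y - f xs + (norm (g y))\<^sup>2 / (2 * L) \<le> g y \<bullet> (y - xs)"
proof -
  let ?z = "xs + (1 / L) *\<^sub>R g y"
  have "L / 2 * (norm (?z - xs))\<^sup>2 = (norm (g y))\<^sup>2 / (2 * L)"
    using L by (simp add: power_divide power2_eq_square)
  then have "f ?z \<le> f xs + (norm (g y))\<^sup>2 / (2 * L)"
    using lipschitz_gradient_descent_inequality[OF grad W lip zW xs] stationary by simp
  moreover have "f y + g y \<bullet> (?z - y) \<le> f ?z"
    by (rule convex_gradient_inequality[OF conv grad])
  moreover have "g y \<bullet> (?z - y) = (norm (g y))\<^sup>2 / L - g y \<bullet> (y - xs)"
    by (simp add: inner_diff_right inner_add_right power2_norm_eq_inner)
  ultimately show ?thesis
    using L by (simp add: field_simps)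
qed

section \<open>Uniform strong monotonicity on compact convex sets\<close>

lemma loc_strongly_convex_imp_loc_strongly_monotone:
  assumes "loc_strongly_convex f g"
  obtains \<delta> \<mu> where "\<And>x. \<delta> x > 0" "\<And>x. \<mu> x > 0"
    "\<And>x y z. y \<in> ball x (\<delta> x) \<Longrightarrow> z \<in> ball x (\<delta> x) \<Longrightarrow>
       \<mu> x * (norm (y - z))\<^sup>2 \<le> (g y - g z) \<bullet> (y - z)"
proof -
  have "\<exists>\<delta>>0. \<exists>\<mu>>0. \<forall>y\<in>ball x \<delta>. \<forall>z\<in>ball x \<delta>. \<mu> * (norm (y - z))\<^sup>2 \<le> (g y - g z) \<bullet> (y - z)" for x
  proof -
    obtain \<delta> \<mu> where pos: "\<delta> > 0" "\<mu> > 0" and sc: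
      "\<And>y z. y \<in> ball x \<delta> \<Longrightarrow> z \<in> ball x \<delta> \<Longrightarrow> f z + g z \<bullet> (y - z) + \<mu> / 2 * (norm (y - z))\<^sup>2 \<le> f y"
      using assms unfolding loc_strongly_convex_def by meson
    have "\<mu> * (norm (y - z))\<^sup>2 \<le> (g y - g z) \<bullet> (y - z)" if "y \<in> ball x \<delta>" "z \<in> ball x \<delta>" for y z
      using sc[OF that] sc[OF that(2,1)]
      by (simp add: norm_minus_commute inner_diff_left inner_diff_right)
    then show ?thesis using pos by blast
  qed
  then show ?thesis using that by metis
qed

lemma strongly_monotone_on_convex_of_close_points:
  fixes g :: "'a::real_inner \<Rightarrow> 'a"
  assumes K: "convex K" and e: "e > 0"
    and close: "\<And>y z. y \<in> K \<Longrightarrow> z \<in> K \<Longrightarrow> dist y z < e \<Longrightarrow>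
      \<mu> * (norm (y - z))\<^sup>2 \<le> (g y - g z) \<bullet> (y - z)"
    and y: "y \<in> K" and z: "z \<in> K"
  shows "\<mu> * (norm (y - z))\<^sup>2 \<le> (g y - g z) \<bullet> (y - z)"
proof -
  obtain N :: nat where N: "norm (y - z) / e < real N"
    using reals_Archimedean2 by blast
  moreover have "0 \<le> norm (y - z) / e"
    using e by simp
  ultimately have N_pos: "real N > 0"
    by linarith
  define p where "p i = z + (real i / real N) *\<^sub>R (y - z)" for i
  have p_diff: "p (Suc i) - p i = (1 / real N) *\<^sub>R (y - z)" for i
    by (simp add: p_def algebra_simps add_divide_distrib)
  have p_in: "p i \<in> K" if "i \<le> N" for i
  proof -
    have "p i = (1 - real i / real N) *\<^sub>R z + (real i / real N) *\<^sub>R y"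
      by (simp add: p_def algebra_simps)
    then show ?thesis
      using convexD_alt[OF K z y, of "real i / real N"] that N_pos by simp
  qed
  have piece: "\<mu> * (norm (y - z))\<^sup>2 / real N \<le> (g (p (Suc i)) - g (p i)) \<bullet> (y - z)"
    if "i < N" for i
  proof -
    have "dist (p (Suc i)) (p i) < e"
      using N N_pos e by (simp only: dist_norm p_diff norm_scaleR) (simp add: field_simps)
    from close[OF p_in p_in this] that
    have "\<mu> * (norm (y - z))\<^sup>2 / (real N)\<^sup>2 \<le> (g (p (Suc i)) - g (p i)) \<bullet> (y - z) / real N"
      by (simp add: p_diff power_divide)
    then show ?thesis
      using N_pos by (simp add: power2_eq_square divide_le_cancel flip: divide_divide_eq_left)
  qed
  have "\<mu> * (norm (y - z))\<^sup>2 = (\<Sum>i<N. \<mu> * (norm (y - z))\<^sup>2 / real N)"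
    using N_pos by simp
  also have "\<dots> \<le> (\<Sum>i<N. (g (p (Suc i)) - g (p i)) \<bullet> (y - z))"
    using piece by (rule sum_mono) simp
  also have "\<dots> = (g (p N) - g (p 0)) \<bullet> (y - z)"
    by (simp only: inner_sum_left[symmetric] sum_lessThan_telescope[of "\<lambda>i. g (p i)"])
  also have "\<dots> = (g y - g z) \<bullet> (y - z)"
    using N_pos by (simp add: p_def)
  finally show ?thesis .
qed

text \<open>A Lebesgue number of the cover by the balls of local strong monotonicity makes the
  local moduli uniform on \<open>K\<close>.\<close>
lemma loc_strongly_convex_imp_strongly_monotone_on_compact:
  fixes g :: "'a::real_inner \<Rightarrow> 'a"
  assumes lsc: "loc_strongly_convex f g" and K: "compact K" "convex K"
  obtains \<mu> where "\<mu> > 0"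
    "\<And>y z. y \<in> K \<Longrightarrow> z \<in> K \<Longrightarrow> \<mu> * (norm (y - z))\<^sup>2 \<le> (g y - g z) \<bullet> (y - z)"
proof -
  obtain \<delta> \<mu> where \<delta>: "\<And>x. \<delta> x > 0" and \<mu>: "\<And>x. \<mu> x > 0"
    and mono: "\<And>x y z. y \<in> ball x (\<delta> x) \<Longrightarrow> z \<in> ball x (\<delta> x) \<Longrightarrow>
       \<mu> x * (norm (y - z))\<^sup>2 \<le> (g y - g z) \<bullet> (y - z)"
    using loc_strongly_convex_imp_loc_strongly_monotone[OF lsc] by blast
  obtain T where T: "T \<subseteq> K" "finite T" "K \<subseteq> (\<Union>x\<in>T. ball x (\<delta> x))"
    by (rule compactE_image[OF K(1), of K "\<lambda>x. ball x (\<delta> x)"]) (use \<delta> in auto)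
  obtain e where e: "e > 0" "\<And>p. p \<in> K \<Longrightarrow> \<exists>x\<in>T. ball p e \<subseteq> ball x (\<delta> x)"
    using Heine_Borel_lemma[OF K(1) T(3)] by auto
  define m where "m = Min (insert 1 (\<mu> ` T))"
  have m_pos: "m > 0"
    using T(2) \<mu> by (simp add: m_def)
  have "m * (norm (y - z))\<^sup>2 \<le> (g y - g z) \<bullet> (y - z)" if "y \<in> K" "z \<in> K" for y z
  proof (rule strongly_monotone_on_convex_of_close_points[OF K(2) e(1) _ that])
    fix y z assume yz: "y \<in> K" "z \<in> K" "dist y z < e"
    obtain x where x: "x \<in> T" "ball z e \<subseteq> ball x (\<delta> x)"
      using e(2)[OF yz(2)] by blast
    have "m \<le> \<mu> x"
      using T(2) x(1) by (simp add: m_def)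
    then have "m * (norm (y - z))\<^sup>2 \<le> \<mu> x * (norm (y - z))\<^sup>2"
      by (simp add: mult_right_mono)
    also have "\<dots> \<le> (g y - g z) \<bullet> (y - z)"
    proof (rule mono)
      have "y \<in> ball z e" "z \<in> ball z e"
        using yz(3) e(1) by (auto simp: dist_commute)
      then show "y \<in> ball x (\<delta> x)" "z \<in> ball x (\<delta> x)"
        using x(2) by blast+
    qed
    finally show "m * (norm (y - z))\<^sup>2 \<le> (g y - g z) \<bullet> (y - z)" .
  qed
  then show ?thesis using that m_pos by blast
qed

definition monotonicity_modulus :: "('a::real_inner \<Rightarrow> 'a) \<Rightarrow> 'a set \<Rightarrow> real" where
  "monotonicity_modulus g W =
     Inf {(g y - g z) \<bullet> (y - z) / (norm (y - z))\<^sup>2 | y z. y \<in> W \<and> z \<in> W \<and> y \<noteq> z}"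

lemma monotonicity_modulus_le:
  assumes mono: "\<And>y z. y \<in> W \<Longrightarrow> z \<in> W \<Longrightarrow> \<mu> * (norm (y - z))\<^sup>2 \<le> (g y - g z) \<bullet> (y - z)"
    and y: "y \<in> W" and z: "z \<in> W"
  shows "monotonicity_modulus g W * (norm (y - z))\<^sup>2 \<le> (g y - g z) \<bullet> (y - z)"
proof (cases "y = z")
  case False
  let ?Q = "{(g y - g z) \<bullet> (y - z) / (norm (y - z))\<^sup>2 | y z. y \<in> W \<and> z \<in> W \<and> y \<noteq> z}"
  have "bdd_below ?Q"
    using mono by (auto intro!: bdd_belowI[of _ \<mu>] simp: le_divide_eq)
  moreover have "(g y - g z) \<bullet> (y - z) / (norm (y - z))\<^sup>2 \<in> ?Q"
    using y z False by blast
  ultimately have "monotonicity_modulus g W \<le> (g y - g z) \<bullet> (y - z) / (norm (y - z))\<^sup>2"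
    unfolding monotonicity_modulus_def by (rule cInf_lower[rotated])
  then show ?thesis
    using False by (simp add: le_divide_eq)
qed simp

lemma monotonicity_modulus_ge:
  assumes mono: "\<And>y z. y \<in> W \<Longrightarrow> z \<in> W \<Longrightarrow> \<mu> * (norm (y - z))\<^sup>2 \<le> (g y - g z) \<bullet> (y - z)"
    and "y \<in> W" "z \<in> W" "y \<noteq> z"
  shows "\<mu> \<le> monotonicity_modulus g W"
  unfolding monotonicity_modulus_def
  using assms by (intro cInf_greatest) (auto simp: le_divide_eq)

lemma strongly_monotone_imp_norm_diff_ge:
  fixes g :: "'a::real_inner \<Rightarrow> 'a"
  assumes "\<mu> * (norm (y - z))\<^sup>2 \<le> (g y - g z) \<bullet> (y - z)"
  shows "\<mu> * norm (y - z) \<le> norm (g y - g z)"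
proof (cases "y = z")
  case False
  have "norm (y - z) * (\<mu> * norm (y - z)) \<le> norm (y - z) * norm (g y - g z)"
    using assms norm_cauchy_schwarz[of "g y - g z" "y - z"]
    by (simp add: power2_eq_square mult_ac)
  then show ?thesis
    using False by simp
qed simp

lemma monotonicity_modulus_bounds:
  fixes g :: "'a::real_inner \<Rightarrow> 'a"
  assumes lsc: "loc_strongly_convex f g" and W: "compact W" "convex W"
    and lip: "L-lipschitz_on W g" and y0: "y0 \<in> W" and z0: "z0 \<in> W" "y0 \<noteq> z0"
  shows "0 < monotonicity_modulus g W" "monotonicity_modulus g W \<le> L"
    and "\<And>y z. y \<in> W \<Longrightarrow> z \<in> W \<Longrightarrow>
      monotonicity_modulus g W * (norm (y - z))\<^sup>2 \<le> (g y - g z) \<bullet> (y - z)"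
proof -
  obtain \<mu> where \<mu>: "\<mu> > 0"
    and mono: "\<And>y z. y \<in> W \<Longrightarrow> z \<in> W \<Longrightarrow> \<mu> * (norm (y - z))\<^sup>2 \<le> (g y - g z) \<bullet> (y - z)"
    using loc_strongly_convex_imp_strongly_monotone_on_compact[OF lsc W] by blast
  show "0 < monotonicity_modulus g W"
    using \<mu> monotonicity_modulus_ge[OF mono y0 z0] by simp
  show modulus: "monotonicity_modulus g W * (norm (y - z))\<^sup>2 \<le> (g y - g z) \<bullet> (y - z)"
    if "y \<in> W" "z \<in> W" for y z
    using monotonicity_modulus_le[OF mono that] .
  have "monotonicity_modulus g W * norm (y0 - z0) \<le> norm (g y0 - g z0)"
    by (rule strongly_monotone_imp_norm_diff_ge[OF modulus[OF y0 z0(1)]])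
  also have "\<dots> \<le> L * norm (y0 - z0)"
    using lipschitz_onD[OF lip y0 z0(1)] by (simp add: dist_norm)
  finally show "monotonicity_modulus g W \<le> L"
    using z0(2) by simp
qed

section \<open>Minimisers and first hitting times\<close>

lemma closed_argmin_set:
  fixes f :: "'a::topological_space \<Rightarrow> real"
  assumes "continuous_on UNIV f"
  shows "closed (argmin_set f)"
proof -
  from assms have "closed {z. f z \<le> f y}" for y
    by (intro closed_Collect_le continuous_on_const) auto
  moreover have "argmin_set f = (\<Inter>y. {z. f z \<le> f y})"
    by (auto simp: argmin_set_def)
  ultimately show ?thesis
    by auto
qed

lemma argmin_set_gradient_eq_0:
  fixes f :: "'a::real_inner \<Rightarrow> real"
  assumes grad: "\<And>z. (f has_derivative (\<lambda>h. g z \<bullet> h)) (at z)" and xs: "xs \<in> argmin_set f"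
  shows "g xs = 0"
proof -
  have "(\<lambda>h. g xs \<bullet> h) = (\<lambda>h. 0)"
    using xs by (intro has_derivative_local_min[OF grad]) (simp add: argmin_set_def)
  then have "g xs \<bullet> g xs = 0"
    by meson
  then show ?thesis by simp
qed

lemma opt_val_eq_argmin: "xs \<in> argmin_set f \<Longrightarrow> opt_val f = f xs"
  unfolding opt_val_def argmin_set_def by (rule cInf_eq_minimum) auto

text \<open>At \<open>k = 0\<close> the truncated exponent \<open>k - 1\<close> is \<open>0\<close>, so the hypothesis also
  asks for \<open>v 0 \<le> c\<close>.\<close>
lemma Least_le_Mbound:
  fixes v :: "nat \<Rightarrow> real"
  assumes r: "0 < r" "r < 1" and \<epsilon>: "\<epsilon> > 0"
    and decay: "\<And>k. v k \<le> c * r ^ (k - 1)"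
  shows "(\<exists>k. v k \<le> \<epsilon>) \<and> (LEAST k. v k \<le> \<epsilon>) \<le> nat (Mbound \<epsilon> c r)"
proof (cases "c \<le> \<epsilon>")
  case True
  then have "v 0 \<le> \<epsilon>"
    using decay[of 0] by simp
  then show ?thesis
    by auto
next
  case False
  define s where "s = ln (c / \<epsilon>) / ln (inverse r)"
  have ln_r: "ln (inverse r) > 0"
    using r by (simp add: ln_inverse)
  have s_pos: "s > 0"
    using False \<epsilon> ln_r by (simp add: s_def)
  have Mbound: "nat (Mbound \<epsilon> c r) = Suc (nat \<lceil>s\<rceil>)"
  proof -
    have "ln (inverse \<epsilon>) + ln c = ln (c / \<epsilon>)"
      using False \<epsilon> by (simp add: ln_inverse ln_div)
    then have "Mbound \<epsilon> c r = \<lceil>s\<rceil> + 1"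
      by (simp add: Mbound_def s_def)
    then show ?thesis
      using s_pos by (simp add: nat_add_distrib)
  qed
  have "v (Suc (nat \<lceil>s\<rceil>)) \<le> c * r powr real (nat \<lceil>s\<rceil>)"
    using decay[of "Suc (nat \<lceil>s\<rceil>)"] r by (simp add: powr_realpow)
  also have "\<dots> \<le> c * r powr s"
    using False \<epsilon> r real_nat_ceiling_ge[of s] by (intro mult_left_mono powr_mono') auto
  also have "r powr s = \<epsilon> / c"
    using False \<epsilon> r ln_r by (simp add: powr_def s_def ln_inverse exp_minus)
  finally have "v (Suc (nat \<lceil>s\<rceil>)) \<le> \<epsilon>"
    using False \<epsilon> by simp
  then show ?thesis
    using Mbound by (auto intro: Least_le)
qed

section \<open>The AdaSGA iteration and its energy\<close>

lemma adasga_alpha_next_mult: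
  assumes "g' > 0"
  shows "adasga_alpha_next \<omega> \<tau> a g th g' L * g' =
    (if L = 0 then a * g * sqrt (2 * (1 - \<omega>\<^sup>2) + th / \<tau>)
     else min (a * g * sqrt (2 * (1 - \<omega>\<^sup>2) + th / \<tau>)) (\<omega> / L))"
  using assms by (simp add: adasga_alpha_next_def Let_def min_mult_distrib_right)

locale adasga =
  fixes f :: "'a::real_inner \<Rightarrow> real" and g :: "'a \<Rightarrow> 'a" and x :: "nat \<Rightarrow> 'a"
    and \<alpha> \<theta> \<gamma> :: "nat \<Rightarrow> real" and \<tau> \<omega> :: real
  assumes convex: "convex_on UNIV f"
    and gradient: "\<And>z. (f has_derivative (\<lambda>h. g z \<bullet> h)) (at z)"
    and alpha_0: "\<alpha> 0 > 0" and theta_0: "\<theta> 0 > 0" and tau: "\<tau> > 1"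
    and omega: "0 < \<omega>" "\<omega> \<le> 1 / sqrt 2"
    and gamma_pos: "\<And>k. \<gamma> k > 0"
    and x_Suc: "\<And>k. x (Suc k) = x k - (\<alpha> k * \<gamma> k) *\<^sub>R g (x k)"
    and alpha_Suc: "\<And>k. \<alpha> (Suc k) =
          adasga_alpha_next \<omega> \<tau> (\<alpha> k) (\<gamma> k) (\<theta> k) (\<gamma> (Suc k)) (adasga_L g x (Suc k))"
    and theta_Suc: "\<And>k. \<theta> (Suc k) = \<alpha> (Suc k) * \<gamma> (Suc k) / (\<alpha> k * \<gamma> k)"
begin

definition step :: "nat \<Rightarrow> real" where
  "step k = \<alpha> k * \<gamma> k"

definition growth :: "nat \<Rightarrow> real" where
  "growth k = sqrt (2 * (1 - \<omega>\<^sup>2) + \<theta> k / \<tau>)"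

definition energy :: "'a \<Rightarrow> nat \<Rightarrow> real" where
  "energy xs k = (norm (x k - xs))\<^sup>2
     + ((step k * norm (g (x k)))\<^sup>2 + step k * \<theta> k * (f (x k) - f xs)) / (1 - \<omega>\<^sup>2)"

lemma omega_sq_le: "\<omega>\<^sup>2 \<le> 1 / 2"
proof -
  have "\<omega>\<^sup>2 \<le> (1 / sqrt 2)\<^sup>2"
    using omega by (intro power_mono) auto
  then show ?thesis
    by (simp add: power_divide)
qed

lemma x_Suc_step: "x (Suc k) = x k - step k *\<^sub>R g (x k)"
  by (simp add: x_Suc step_def)

lemma theta_Suc_step: "\<theta> (Suc k) = step (Suc k) / step k"
  by (simp add: theta_Suc step_def)

lemma step_Suc:
  "step (Suc k) = (if adasga_L g x (Suc k) = 0 then step k * growth k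
                   else min (step k * growth k) (\<omega> / adasga_L g x (Suc k)))"
  using adasga_alpha_next_mult[OF gamma_pos[of "Suc k"]] alpha_Suc[of k]
  by (simp add: step_def growth_def)

lemma growth_ge_1: "1 \<le> growth k" if "\<theta> k > 0"
proof -
  have "\<theta> k / \<tau> > 0"
    using that tau by simp
  then have "1 \<le> 2 * (1 - \<omega>\<^sup>2) + \<theta> k / \<tau>"
    using omega_sq_le by simp
  then show ?thesis
    by (simp add: growth_def)
qed

lemma step_theta_pos: "step k > 0 \<and> \<theta> k > 0"
proof (induction k)
  case 0
  then show ?case
    using alpha_0 theta_0 gamma_pos by (simp add: step_def)
next
  case (Suc k)
  have "step k * growth k > 0"
    using Suc growth_ge_1[of k] by simp
  moreover have "adasga_L g x (Suc k) \<ge> 0"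
    by (simp add: adasga_L_def)
  ultimately have "step (Suc k) > 0"
    using step_Suc[of k] omega by auto
  then show ?case
    using Suc by (simp add: theta_Suc_step)
qed

lemma step_pos: "step k > 0" and theta_pos: "\<theta> k > 0"
  using step_theta_pos by auto

lemma step_Suc_le_growth: "step (Suc k) \<le> step k * growth k"
  using step_Suc[of k] by simp

lemma step_Suc_lipschitz:
  "step (Suc k) * norm (g (x (Suc k)) - g (x k)) \<le> \<omega> * norm (x (Suc k) - x k)"
proof (cases "adasga_L g x (Suc k) = 0")
  case True
  then have "g (x (Suc k)) = g (x k)"
    by (auto simp: adasga_L_def)
  then show ?thesis
    using omega by simp
next
  case False
  then have dx: "norm (x (Suc k) - x k) > 0"
    by (auto simp: adasga_L_def)
  have "step (Suc k) \<le> \<omega> / adasga_L g x (Suc k)"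
    using step_Suc[of k] False by simp
  then show ?thesis
    using False dx by (simp add: adasga_L_def field_simps)
qed

lemma dist_Suc_sq:
  "(norm (x (Suc k) - xs))\<^sup>2
     = (norm (x k - xs))\<^sup>2 - 2 * step k * (g (x k) \<bullet> (x k - xs)) + (step k * norm (g (x k)))\<^sup>2"
  unfolding x_Suc_step power_mult_distrib power2_norm_eq_inner
  by (simp add: inner_diff_left inner_diff_right algebra_simps power2_eq_square inner_commute)

lemma norm_gradient_Suc_sq:
  "(norm (g (x (Suc k))))\<^sup>2 = (norm (g (x k)))\<^sup>2
     - 2 * ((g (x (Suc k)) - g (x k)) \<bullet> (x (Suc k) - x k)) / step k
     + (norm (g (x (Suc k)) - g (x k)))\<^sup>2"
proof -
  define d where "d = g (x (Suc k)) - g (x k)"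
  have "(norm (g (x (Suc k))))\<^sup>2 = (norm (g (x k) + d))\<^sup>2"
    by (simp add: d_def)
  also have "\<dots> = (norm (g (x k)))\<^sup>2 - 2 * (d \<bullet> (x (Suc k) - x k)) / step k + (norm d)\<^sup>2"
    using step_pos[of k] unfolding x_Suc_step power2_norm_eq_inner
    by (simp add: inner_add_left inner_add_right inner_commute)
  finally show ?thesis
    by (simp add: d_def)
qed

lemma objective_Suc_le:
  "f (x (Suc k)) \<le> f (x k) - step k * (norm (g (x k)))\<^sup>2
     + (g (x (Suc k)) - g (x k)) \<bullet> (x (Suc k) - x k)"
proof -
  have "f (x (Suc k)) + g (x (Suc k)) \<bullet> (x k - x (Suc k)) \<le> f (x k)"
    by (rule convex_gradient_inequality[OF convex gradient])
  moreover have "x k - x (Suc k) = step k *\<^sub>R g (x k)"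
    by (simp add: x_Suc_step)
  ultimately show ?thesis
    by (simp add: x_Suc_step inner_diff_left power2_norm_eq_inner inner_commute algebra_simps)
qed

lemma gradient_terms_Suc_le:
  assumes "f xs \<le> f (x k)"
  shows "(step (Suc k) * norm (g (x (Suc k))))\<^sup>2 + step (Suc k) * \<theta> (Suc k) * (f (x (Suc k)) - f xs)
    \<le> \<omega>\<^sup>2 * (step k * norm (g (x k)))\<^sup>2 + step k * (2 * (1 - \<omega>\<^sup>2) + \<theta> k / \<tau>) * (f (x k) - f xs)"
proof -
  define t t' where "t = step k" and "t' = step (Suc k)"
  define d where "d = g (x (Suc k)) - g (x k)"
  define F F' where "F = f (x k) - f xs" and "F' = f (x (Suc k)) - f xs"
  define P where "P = d \<bullet> (x (Suc k) - x k)"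
  have t: "t > 0" "t' > 0"
    using step_pos by (auto simp: t_def t'_def)
  have P_nn: "0 \<le> P"
    unfolding P_def d_def by (rule convex_gradient_monotone[OF convex gradient])
  have F': "F' \<le> F - t * (norm (g (x k)))\<^sup>2 + P"
    using objective_Suc_le[of k] by (simp add: F_def F'_def t_def P_def d_def)
  have "(t' * norm (g (x (Suc k))))\<^sup>2 + t' * \<theta> (Suc k) * F'
      \<le> t'\<^sup>2 * ((norm (g (x k)))\<^sup>2 - 2 * P / t + (norm d)\<^sup>2) + t'\<^sup>2 / t * (F - t * (norm (g (x k)))\<^sup>2 + P)"
    using F' t
    by (simp add: power_mult_distrib norm_gradient_Suc_sq theta_Suc_step flip: t_def t'_def d_def P_def)
      (simp add: power2_eq_square divide_right_mono mult_left_mono)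
  \<comment> \<open>As \<open>\<theta> (Suc k) = t' / t\<close>, the monotonicity term \<open>P\<close> is left with weight \<open>- t'\<^sup>2 / t\<close> and can be dropped.\<close>
  also have "\<dots> = (t' * norm d)\<^sup>2 + t'\<^sup>2 / t * F - t'\<^sup>2 * P / t"
    using t by (simp add: field_simps power2_eq_square)
  also have "\<dots> \<le> (t' * norm d)\<^sup>2 + t'\<^sup>2 / t * F"
    using P_nn t by simp
  also have "(t' * norm d)\<^sup>2 \<le> (\<omega> * (t * norm (g (x k))))\<^sup>2"
    using step_Suc_lipschitz[of k] t
    by (intro power_mono) (simp_all add: t_def t'_def d_def x_Suc_step)
  also have "t'\<^sup>2 / t * F \<le> t * (2 * (1 - \<omega>\<^sup>2) + \<theta> k / \<tau>) * F"
  proof -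
    have "t'\<^sup>2 \<le> (t * growth k)\<^sup>2"
      using step_Suc_le_growth[of k] t by (intro power_mono) (simp_all add: t_def t'_def)
    also have "\<dots> = t\<^sup>2 * (2 * (1 - \<omega>\<^sup>2) + \<theta> k / \<tau>)"
      using theta_pos[of k] tau omega_sq_le by (simp add: growth_def power_mult_distrib)
    finally show ?thesis
      using t assms by (intro mult_right_mono) (simp_all add: F_def field_simps power2_eq_square)
  qed
  finally show ?thesis
    by (simp add: t_def t'_def F_def F'_def power_mult_distrib)
qed

lemma energy_Suc_le:
  assumes "xs \<in> argmin_set f"
  shows "energy xs (Suc k) \<le> (norm (x k - xs))\<^sup>2
           - 2 * step k * (g (x k) \<bullet> (x k - xs) - (f (x k) - f xs))
           + ((step k * norm (g (x k)))\<^sup>2 + step k * \<theta> k * (f (x k) - f xs) / \<tau>) / (1 - \<omega>\<^sup>2)"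
proof -
  have \<omega>: "1 - \<omega>\<^sup>2 > 0"
    using omega_sq_le by simp
  have "f xs \<le> f (x k)"
    using assms by (simp add: argmin_set_def)
  from divide_right_mono[OF gradient_terms_Suc_le[OF this] less_imp_le[OF \<omega>]]
  have "energy xs (Suc k) \<le> (norm (x (Suc k) - xs))\<^sup>2
      + (\<omega>\<^sup>2 * (step k * norm (g (x k)))\<^sup>2
         + step k * (2 * (1 - \<omega>\<^sup>2) + \<theta> k / \<tau>) * (f (x k) - f xs)) / (1 - \<omega>\<^sup>2)"
    by (simp add: energy_def)
  also have "\<dots> = (norm (x k - xs))\<^sup>2
           - 2 * step k * (g (x k) \<bullet> (x k - xs) - (f (x k) - f xs))
           + ((step k * norm (g (x k)))\<^sup>2 + step k * \<theta> k * (f (x k) - f xs) / \<tau>) / (1 - \<omega>\<^sup>2)"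
    using \<omega> unfolding dist_Suc_sq by (simp add: field_simps)
  finally show ?thesis .
qed

lemma energy_mono:
  assumes xs: "xs \<in> argmin_set f"
  shows "energy xs (Suc k) \<le> energy xs k"
proof -
  have F: "0 \<le> f (x k) - f xs"
    using xs by (simp add: argmin_set_def)
  have "f (x k) + g (x k) \<bullet> (xs - x k) \<le> f xs"
    by (rule convex_gradient_inequality[OF convex gradient])
  then have "0 \<le> 2 * step k * (g (x k) \<bullet> (x k - xs) - (f (x k) - f xs))"
    using step_pos[of k] by (simp add: inner_diff_right)
  moreover have "step k * \<theta> k * (f (x k) - f xs) / \<tau> \<le> step k * \<theta> k * (f (x k) - f xs)"
    using F step_pos[of k] theta_pos[of k] tau mult_left_mono[of 1 \<tau> "f (x k) - f xs"]
    by (simp add: divide_le_eq)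
  then have "((step k * norm (g (x k)))\<^sup>2 + step k * \<theta> k * (f (x k) - f xs) / \<tau>) / (1 - \<omega>\<^sup>2)
      \<le> ((step k * norm (g (x k)))\<^sup>2 + step k * \<theta> k * (f (x k) - f xs)) / (1 - \<omega>\<^sup>2)"
    using omega_sq_le by (intro divide_right_mono) auto
  ultimately show ?thesis
    using energy_Suc_le[OF xs, of k] unfolding energy_def by linarith
qed

lemma energy_le_initial: "xs \<in> argmin_set f \<Longrightarrow> energy xs k \<le> energy xs 0"
  by (induction k) (auto intro: order_trans[OF energy_mono])

lemma dist_sq_le_energy:
  assumes "xs \<in> argmin_set f"
  shows "(norm (x k - xs))\<^sup>2 \<le> energy xs k"
proof -
  have "0 \<le> f (x k) - f xs"
    using assms by (simp add: argmin_set_def)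
  then have "0 \<le> ((step k * norm (g (x k)))\<^sup>2 + step k * \<theta> k * (f (x k) - f xs)) / (1 - \<omega>\<^sup>2)"
    using step_pos[of k] theta_pos[of k] omega_sq_le by simp
  then show ?thesis
    by (simp add: energy_def)
qed

lemma energy_0_le:
  assumes "xs \<in> argmin_set f"
  shows "energy xs 0 \<le> (norm (x 0 - xs))\<^sup>2 + 2 * (\<alpha> 0)\<^sup>2 * (\<gamma> 0)\<^sup>2 * (norm (g (x 0)))\<^sup>2
           + 2 * \<alpha> 0 * \<gamma> 0 * \<theta> 0 * (f (x 0) - f xs)"
proof -
  define G where "G = (step 0 * norm (g (x 0)))\<^sup>2 + step 0 * \<theta> 0 * (f (x 0) - f xs)"
  have "0 \<le> G"
    using assms step_pos[of 0] theta_pos[of 0] by (simp add: G_def argmin_set_def)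
  moreover have "1 / 2 \<le> 1 - \<omega>\<^sup>2"
    using omega_sq_le by simp
  ultimately have "G / (1 - \<omega>\<^sup>2) \<le> G / (1 / 2)"
    by (intro divide_left_mono) auto
  then show ?thesis
    by (simp add: energy_def G_def step_def power_mult_distrib algebra_simps)
qed

end

section \<open>Linear convergence near a minimiser\<close>

locale adasga_local = adasga f g x \<alpha> \<theta> \<gamma> \<tau> \<omega>
  for f :: "'a::real_inner \<Rightarrow> real" and g x \<alpha> \<theta> \<gamma> \<tau> \<omega> +
  fixes xs :: 'a and W :: "'a set" and L \<mu> :: real
  assumes minimizer: "xs \<in> argmin_set f"
    and convex_W: "convex W"
    and energy_ball_subset: "cball xs (sqrt (energy xs 0)) \<subseteq> W"
    and lipschitz: "L-lipschitz_on W g" and L_pos: "0 < L"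
    and strongly_monotone:
      "\<And>y z. y \<in> W \<Longrightarrow> z \<in> W \<Longrightarrow> \<mu> * (norm (y - z))\<^sup>2 \<le> (g y - g z) \<bullet> (y - z)"
    and mu_pos: "0 < \<mu>"
begin

lemma gradient_minimizer: "g xs = 0"
  by (rule argmin_set_gradient_eq_0[OF gradient minimizer])

lemma dist_le_initial_energy: "norm (x k - xs) \<le> sqrt (energy xs 0)"
  using dist_sq_le_energy[OF minimizer, of k] energy_le_initial[OF minimizer, of k]
  by (simp add: real_le_rsqrt)

lemma in_W_if_close: "norm (y - xs) \<le> norm (x k - xs) \<Longrightarrow> y \<in> W"
  using dist_le_initial_energy[of k] energy_ball_subset
  by (auto simp: dist_norm norm_minus_commute)

lemma x_in_W: "x k \<in> W" and minimizer_in_W: "xs \<in> W"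
  by (auto intro: in_W_if_close)

lemma norm_gradient_le: "norm (g (x k)) \<le> L * norm (x k - xs)"
  using lipschitz_onD[OF lipschitz x_in_W minimizer_in_W] gradient_minimizer
  by (simp add: dist_norm)

lemma adasga_L_le: "adasga_L g x (Suc k) \<le> L"
proof (cases "x (Suc k) = x k")
  case False
  have "norm (g (x (Suc k)) - g (x k)) \<le> L * norm (x (Suc k) - x k)"
    using lipschitz_onD[OF lipschitz x_in_W x_in_W] by (simp add: dist_norm)
  then show ?thesis
    using False by (simp add: adasga_L_def divide_le_eq)
qed (simp add: adasga_L_def L_pos less_imp_le)

lemma adasga_L_ge: "x (Suc k) \<noteq> x k \<Longrightarrow> \<mu> \<le> adasga_L g x (Suc k)"
  using strongly_monotone_imp_norm_diff_ge[where g = g,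
      OF strongly_monotone[OF x_in_W[of "Suc k"] x_in_W[of k]]]
  by (simp add: adasga_L_def le_divide_eq)

lemma step_ge: "min (step 0) (\<omega> / L) \<le> step k"
proof (induction k)
  case (Suc k)
  have "step k \<le> step k * growth k"
    using mult_left_mono[OF growth_ge_1[OF theta_pos] less_imp_le[OF step_pos]] by simp
  with Suc.IH have "min (step 0) (\<omega> / L) \<le> step k * growth k"
    by linarith
  moreover have "\<omega> / L \<le> \<omega> / adasga_L g x (Suc k)" if "adasga_L g x (Suc k) \<noteq> 0"
  proof -
    have "0 < adasga_L g x (Suc k)"
      using that by (simp add: adasga_L_def order.strict_iff_order)
    then show ?thesis
      using adasga_L_le[of k] omega(1) by (intro divide_left_mono) auto
  qed
  ultimately show ?case
    using step_Suc[of k] by auto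
qed simp

lemma step_le: "g (x (Suc k)) \<noteq> 0 \<Longrightarrow> step (Suc k) \<le> \<omega> / \<mu>"
proof -
  assume "g (x (Suc k)) \<noteq> 0"
  then have "x (Suc k) \<noteq> x k"
    using x_Suc_step[of k] step_pos[of k] by auto
  then have L: "\<mu> \<le> adasga_L g x (Suc k)"
    by (rule adasga_L_ge)
  then have "step (Suc k) \<le> \<omega> / adasga_L g x (Suc k)"
    using step_Suc[of k] mu_pos by simp
  also have "\<dots> \<le> \<omega> / \<mu>"
    using L mu_pos omega(1) by (intro divide_left_mono) auto
  finally show ?thesis .
qed

lemma inner_gradient_ge_strong_convexity:
  "f (x k) - f xs + \<mu> / 2 * (norm (x k - xs))\<^sup>2 \<le> g (x k) \<bullet> (x k - xs)"
  using strongly_monotone_imp_strong_convexity_inequality[OF gradient convex_W strongly_monotone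
      minimizer_in_W x_in_W[of k]]
  by (simp add: inner_diff_right norm_minus_commute)

lemma inner_gradient_ge_cocoercivity:
  "f (x k) - f xs + (norm (g (x k)))\<^sup>2 / (2 * L) \<le> g (x k) \<bullet> (x k - xs)"
proof -
  have "norm (xs + (1 / L) *\<^sub>R g (x k) - xs) \<le> norm (x k - xs)"
    using norm_gradient_le[of k] L_pos by (simp add: divide_le_eq mult.commute)
  then show ?thesis
    using cocoercivity_at_stationary_point[OF convex gradient convex_W lipschitz L_pos
        minimizer_in_W gradient_minimizer in_W_if_close] by simp
qed

lemma gradient_term_contraction:
  assumes q_step: "q \<le> \<mu> / 2 * min (step 0) (\<omega> / L)"
  shows "q * (step (Suc k) * norm (g (x (Suc k))))\<^sup>2 / (1 - \<omega>\<^sup>2)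
    \<le> step (Suc k) * (norm (g (x (Suc k))))\<^sup>2 / (2 * L)"
proof (cases "g (x (Suc k)) = 0")
  case False
  define t G where "t = step (Suc k)" and "G = norm (g (x (Suc k)))"
  have t: "0 < t"
    using step_pos by (simp add: t_def)
  have \<omega>: "0 < 1 - \<omega>\<^sup>2" "\<omega>\<^sup>2 \<le> 1 - \<omega>\<^sup>2"
    using omega_sq_le by simp_all
  have "\<mu> / 2 * min (step 0) (\<omega> / L) \<le> \<mu> / 2 * (\<omega> / L)"
    using mu_pos by (intro mult_left_mono) auto
  with q_step have "q \<le> \<mu> / 2 * (\<omega> / L)"
    by linarith
  moreover have "t \<le> \<omega> / \<mu>"
    using step_le[OF False] by (simp add: t_def)
  ultimately have "q * t \<le> \<mu> / 2 * (\<omega> / L) * (\<omega> / \<mu>)"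
    using t mu_pos omega(1) L_pos by (intro mult_mono) auto
  also have "\<dots> = \<omega>\<^sup>2 / (2 * L)"
    using mu_pos by (simp add: power2_eq_square)
  finally have "q * t * (t * G\<^sup>2) \<le> \<omega>\<^sup>2 / (2 * L) * (t * G\<^sup>2)"
    using t by (intro mult_right_mono) auto
  then have "q * (t * G)\<^sup>2 / (1 - \<omega>\<^sup>2) \<le> \<omega>\<^sup>2 / (2 * L) * (t * G\<^sup>2) / (1 - \<omega>\<^sup>2)"
    using \<omega> by (intro divide_right_mono) (simp_all add: power2_eq_square mult_ac)
  also have "\<dots> = \<omega>\<^sup>2 / (1 - \<omega>\<^sup>2) * (t * G\<^sup>2 / (2 * L))"
    by simp
  also have "\<dots> \<le> t * G\<^sup>2 / (2 * L)"
    using \<omega> t L_pos by (intro mult_left_le_one_le) auto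
  finally show ?thesis
    by (simp add: t_def G_def)
qed simp

lemma energy_contraction:
  assumes q_step: "q \<le> \<mu> / 2 * min (step 0) (\<omega> / L)" and q_tau: "q \<le> 1 - 1 / \<tau>"
  shows "energy xs (Suc (Suc k)) \<le> (1 - q) * energy xs (Suc k)"
proof -
  define j where "j = Suc k"
  define t X G F I where "t = step j" and "X = (norm (x j - xs))\<^sup>2" and "G = norm (g (x j))"
    and "F = f (x j) - f xs" and "I = g (x j) \<bullet> (x j - xs)"
  have t: "0 < t"
    using step_pos by (simp add: t_def)
  have "\<mu> / 2 * X + G\<^sup>2 / (2 * L) \<le> 2 * (I - F)"
    using inner_gradient_ge_strong_convexity[of j] inner_gradient_ge_cocoercivity[of j]
    by (simp add: X_def G_def F_def I_def)
  from mult_left_mono[OF this less_imp_le[OF t]]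
  have descent: "t * \<mu> / 2 * X + t * G\<^sup>2 / (2 * L) \<le> 2 * t * (I - F)"
    by (simp add: algebra_simps)
  have "q \<le> \<mu> / 2 * t"
    using q_step mult_left_mono[OF step_ge[of j] less_imp_le[OF half_gt_zero[OF mu_pos]]]
    by (simp add: t_def)
  then have distance: "q * X \<le> t * \<mu> / 2 * X"
    using mult_right_mono[of q "\<mu> / 2 * t" X] by (simp add: X_def mult_ac)
  have gradient: "q * (t * G)\<^sup>2 / (1 - \<omega>\<^sup>2) \<le> t * G\<^sup>2 / (2 * L)"
    using gradient_term_contraction[OF q_step, of k] by (simp add: t_def G_def j_def)
  have weighted: "1 / \<tau> * (t * \<theta> j * F) \<le> (1 - q) * (t * \<theta> j * F)"
    using q_tau tau t theta_pos[of j] minimizer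
    by (intro mult_right_mono) (simp_all add: F_def argmin_set_def)
  have "0 \<le> 1 - \<omega>\<^sup>2"
    using omega_sq_le by simp
  from divide_right_mono[OF weighted this]
  have objective: "(t * \<theta> j * F / \<tau>) / (1 - \<omega>\<^sup>2) \<le> (1 - q) * (t * \<theta> j * F / (1 - \<omega>\<^sup>2))"
    by simp
  have "energy xs (Suc j) \<le> X - 2 * t * (I - F) + (t * G)\<^sup>2 / (1 - \<omega>\<^sup>2)
      + (t * \<theta> j * F / \<tau>) / (1 - \<omega>\<^sup>2)"
    using energy_Suc_le[OF minimizer, of j]
    by (simp add: t_def X_def G_def F_def I_def add_divide_distrib)
  also have "\<dots> \<le> X - (q * X + q * ((t * G)\<^sup>2 / (1 - \<omega>\<^sup>2))) + (t * G)\<^sup>2 / (1 - \<omega>\<^sup>2)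
      + (1 - q) * (t * \<theta> j * F / (1 - \<omega>\<^sup>2))"
    using descent distance gradient objective times_divide_eq_right[of q "(t * G)\<^sup>2" "1 - \<omega>\<^sup>2"]
    by (simp add: left_diff_distrib)
  also have "\<dots> = (1 - q) * (X + (t * G)\<^sup>2 / (1 - \<omega>\<^sup>2) + t * \<theta> j * F / (1 - \<omega>\<^sup>2))"
    by (simp add: algebra_simps diff_divide_distrib)
  also have "\<dots> = (1 - q) * energy xs j"
    by (simp add: energy_def t_def X_def G_def F_def add_divide_distrib)
  finally show ?thesis
    by (simp add: j_def)
qed

lemma energy_decay:
  assumes q_step: "q \<le> \<mu> / 2 * min (step 0) (\<omega> / L)" and q_tau: "q \<le> 1 - 1 / \<tau>"
  shows "energy xs k \<le> (1 - q) ^ (k - 1) * energy xs 0"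
proof (induction k)
  case (Suc k)
  note IH = Suc.IH
  show ?case
  proof (cases k)
    case 0
    then show ?thesis
      using energy_mono[OF minimizer, of 0] by simp
  next
    case (Suc j)
    have "0 < 1 / \<tau>"
      using tau by simp
    then have "0 \<le> 1 - q"
      using q_tau by linarith
    have "energy xs (Suc k) \<le> (1 - q) * energy xs k"
      using energy_contraction[OF q_step q_tau, of j] by (simp add: Suc)
    also have "\<dots> \<le> (1 - q) * ((1 - q) ^ (k - 1) * energy xs 0)"
      using IH \<open>0 \<le> 1 - q\<close> by (rule mult_left_mono)
    also have "\<dots> = (1 - q) ^ (Suc k - 1) * energy xs 0"
      by (simp add: Suc)
    finally show ?thesis .
  qed
qed simp

lemma objective_gap_le: "f (x k) - f xs \<le> L / 2 * (norm (x k - xs))\<^sup>2"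
  using lipschitz_gradient_descent_inequality[OF gradient convex_W lipschitz x_in_W[of k] minimizer_in_W]
  by (simp add: gradient_minimizer)

lemma dist_sq_decay:
  assumes q_step: "q \<le> \<mu> / 2 * min (step 0) (\<omega> / L)" and q_tau: "q \<le> 1 - 1 / \<tau>"
    and \<eta>: "energy xs 0 \<le> \<eta>"
  shows "(norm (x k - xs))\<^sup>2 \<le> (1 - q) ^ (k - 1) * \<eta>"
proof -
  have "0 < 1 / \<tau>"
    using tau by simp
  then have "0 \<le> 1 - q"
    using q_tau by linarith
  then have "(1 - q) ^ (k - 1) * energy xs 0 \<le> (1 - q) ^ (k - 1) * \<eta>"
    using \<eta> by (intro mult_left_mono) auto
  then show ?thesis
    using dist_sq_le_energy[OF minimizer, of k] energy_decay[OF q_step q_tau, of k] by linarith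
qed

lemma dist_decay:
  assumes "q \<le> \<mu> / 2 * min (step 0) (\<omega> / L)" "q \<le> 1 - 1 / \<tau>" "energy xs 0 \<le> \<eta>"
  shows "norm (x k - xs) \<le> sqrt \<eta> * sqrt (1 - q) ^ (k - 1)"
  using real_sqrt_le_mono[OF dist_sq_decay[OF assms, of k]]
  by (simp add: real_sqrt_mult real_sqrt_power mult.commute)

lemma hitting_times:
  assumes q: "0 < q" "q \<le> \<mu> / 2 * min (step 0) (\<omega> / L)" "q \<le> 1 - 1 / \<tau>"
    and \<epsilon>: "0 < \<epsilon>" and \<eta>: "energy xs 0 \<le> \<eta>"
    and c: "sqrt \<eta> \<le> c1" "L / 2 * \<eta> \<le> c2" "L * sqrt \<eta> \<le> c3"
  shows "((\<exists>k. norm (x k - xs) \<le> \<epsilon>) \<and>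
            (LEAST k. norm (x k - xs) \<le> \<epsilon>) \<le> nat (Mbound \<epsilon> c1 (sqrt (1 - q)))) \<and>
         ((\<exists>k. f (x k) - f xs \<le> \<epsilon>) \<and>
            (LEAST k. f (x k) - f xs \<le> \<epsilon>) \<le> nat (Mbound \<epsilon> c2 (1 - q))) \<and>
         ((\<exists>k. norm (g (x k)) \<le> \<epsilon>) \<and>
            (LEAST k. norm (g (x k)) \<le> \<epsilon>) \<le> nat (Mbound \<epsilon> c3 (sqrt (1 - q))))"
proof -
  have "0 < 1 / \<tau>"
    using tau by simp
  then have rate: "0 < 1 - q" "1 - q < 1"
    using q by linarith+
  note dist_sq = dist_sq_decay[OF q(2,3) \<eta>] and dist = dist_decay[OF q(2,3) \<eta>]
  have "(\<exists>k. norm (x k - xs) \<le> \<epsilon>) \<and>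
      (LEAST k. norm (x k - xs) \<le> \<epsilon>) \<le> nat (Mbound \<epsilon> c1 (sqrt (1 - q)))"
  proof (rule Least_le_Mbound[OF _ _ \<epsilon>])
    show "0 < sqrt (1 - q)" "sqrt (1 - q) < 1"
      using rate by simp_all
    fix k
    show "norm (x k - xs) \<le> c1 * sqrt (1 - q) ^ (k - 1)"
      by (rule order_trans[OF dist mult_right_mono[OF c(1)]]) (use rate in simp)
  qed
  moreover have "(\<exists>k. f (x k) - f xs \<le> \<epsilon>) \<and>
      (LEAST k. f (x k) - f xs \<le> \<epsilon>) \<le> nat (Mbound \<epsilon> c2 (1 - q))"
  proof (rule Least_le_Mbound[OF rate \<epsilon>])
    fix k
    have "f (x k) - f xs \<le> L / 2 * ((1 - q) ^ (k - 1) * \<eta>)"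
      by (rule order_trans[OF objective_gap_le mult_left_mono[OF dist_sq]]) (use L_pos in simp)
    also have "\<dots> \<le> c2 * (1 - q) ^ (k - 1)"
      using c(2) rate by (simp add: mult_right_mono mult_ac)
    finally show "f (x k) - f xs \<le> c2 * (1 - q) ^ (k - 1)" .
  qed
  moreover have "(\<exists>k. norm (g (x k)) \<le> \<epsilon>) \<and>
      (LEAST k. norm (g (x k)) \<le> \<epsilon>) \<le> nat (Mbound \<epsilon> c3 (sqrt (1 - q)))"
  proof (rule Least_le_Mbound[OF _ _ \<epsilon>])
    show "0 < sqrt (1 - q)" "sqrt (1 - q) < 1"
      using rate by simp_all
    fix k
    have "norm (g (x k)) \<le> L * (sqrt \<eta> * sqrt (1 - q) ^ (k - 1))"
      by (rule order_trans[OF norm_gradient_le mult_left_mono[OF dist]]) (use L_pos in simp)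
    also have "\<dots> \<le> c3 * sqrt (1 - q) ^ (k - 1)"
      using c(3) rate by (simp add: mult_right_mono flip: mult.assoc)
    finally show "norm (g (x k)) \<le> c3 * sqrt (1 - q) ^ (k - 1)" .
  qed
  ultimately show ?thesis
    by blast
qed

end

section \<open>The constants of the complexity bounds\<close>

lemma adasga_rate_bounds:
  fixes \<mu> L t \<omega> \<tau> q :: real
  assumes \<mu>: "0 < \<mu>" and L: "0 < L" and t: "0 < t" and \<omega>: "0 < \<omega>" "\<omega>\<^sup>2 < 1" and \<tau>: "1 < \<tau>"
    and q: "q = min (min (\<mu> / 2 * min t (\<omega> / L)) (\<mu> * (1 - \<omega>\<^sup>2) / (2 * \<omega>^3 * L + \<mu> * (1 - \<omega>\<^sup>2))))
               ((\<tau> - 1) * min (t * \<mu> / \<omega>) (\<mu> / L) / (\<tau> * (2 * (1 - \<omega>\<^sup>2) + min (t * \<mu> / \<omega>) (\<mu> / L))))"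
  shows "0 < q" "q \<le> \<mu> / 2 * min t (\<omega> / L)" "q \<le> 1 - 1 / \<tau>"
proof -
  define m where "m = min (t * \<mu> / \<omega>) (\<mu> / L)"
  have m: "0 < m"
    using \<mu> L t \<omega> by (simp add: m_def)
  have "(\<tau> - 1) * m / (\<tau> * (2 * (1 - \<omega>\<^sup>2) + m)) = (1 - 1 / \<tau>) * (m / (2 * (1 - \<omega>\<^sup>2) + m))"
    using \<tau> by (simp add: field_simps)
  also have "\<dots> \<le> 1 - 1 / \<tau>"
    using \<tau> m \<omega> by (intro mult_left_le) auto
  finally show "q \<le> 1 - 1 / \<tau>"
    unfolding q m_def[symmetric] by (rule min.coboundedI2)
  show "q \<le> \<mu> / 2 * min t (\<omega> / L)"
    unfolding q by (intro min.coboundedI1) simp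
  have "0 < \<mu> * (1 - \<omega>\<^sup>2) / (2 * \<omega>^3 * L + \<mu> * (1 - \<omega>\<^sup>2))"
    using \<mu> \<omega> L by (intro divide_pos_pos add_pos_pos mult_pos_pos) auto
  moreover have "0 < (\<tau> - 1) * m / (\<tau> * (2 * (1 - \<omega>\<^sup>2) + m))"
    using \<tau> m \<omega> by (intro divide_pos_pos mult_pos_pos add_pos_pos) auto
  ultimately show "0 < q"
    using q \<mu> t \<omega> L by (simp add: m_def)
qed

lemma adasga_gap_constant_bound:
  fixes \<mu> L \<omega> a b \<eta> c :: real
  assumes \<mu>: "0 < \<mu>" "\<mu> \<le> L" and \<omega>: "0 < \<omega>" "\<omega>\<^sup>2 \<le> 1 / 2" and ab: "0 < a" "0 < b"
    and \<eta>: "0 \<le> \<eta>" "2 * \<eta> \<le> c\<^sup>2"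
  shows "L / 2 * \<eta> \<le> \<omega> * L\<^sup>2 * c\<^sup>2 / (\<mu> * min (a\<^sup>2 * b\<^sup>2 * L\<^sup>2) (\<omega>\<^sup>2))"
proof -
  have \<omega>1: "\<omega> \<le> 1"
    using power2_le_imp_le[of \<omega> 1] \<omega> by simp
  have m: "0 < min (a\<^sup>2 * b\<^sup>2 * L\<^sup>2) (\<omega>\<^sup>2)"
    using ab \<mu> \<omega> by simp
  have "L / 2 * \<eta> \<le> L * c\<^sup>2"
    using \<mu> \<eta> by (simp add: mult_left_mono)
  also have "\<dots> \<le> L * c\<^sup>2 / \<omega>"
    using \<mu> \<omega> \<omega>1 by (simp add: le_divide_eq mult_left_le)
  also have "\<dots> = \<omega> * L\<^sup>2 * c\<^sup>2 / (L * \<omega>\<^sup>2)"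
    using \<mu> \<omega> by (simp add: power2_eq_square field_simps)
  also have "\<dots> \<le> \<omega> * L\<^sup>2 * c\<^sup>2 / (\<mu> * min (a\<^sup>2 * b\<^sup>2 * L\<^sup>2) (\<omega>\<^sup>2))"
    using \<mu> \<omega> m by (intro divide_left_mono mult_mono) auto
  finally show ?thesis .
qed

lemma adasga_gradient_constant_bound:
  fixes \<mu> L \<omega> a b \<eta> c :: real
  assumes \<mu>: "0 < \<mu>" "\<mu> \<le> L" and \<omega>: "0 < \<omega>" "\<omega>\<^sup>2 \<le> 1 / 2" and ab: "0 < a" "0 < b"
    and \<eta>: "0 \<le> \<eta>" "2 * \<eta> \<le> c\<^sup>2"
  shows "L * sqrt \<eta> \<le> sqrt (2 * c\<^sup>2 * (1 - \<omega>\<^sup>2) * \<omega> * L^3)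
           / (sqrt (2 * \<omega>\<^sup>2 * L + (1 - \<omega>\<^sup>2) * \<mu>) * min (a * b * L) \<omega>)"
proof -
  define D m where "D = 2 * \<omega>\<^sup>2 * L + (1 - \<omega>\<^sup>2) * \<mu>" and "m = min (a * b * L) \<omega>"
  have \<omega>1: "\<omega> \<le> 1"
    using power2_le_imp_le[of \<omega> 1] \<omega> by simp
  have "(1 - \<omega>\<^sup>2) * \<mu> \<le> (1 - \<omega>\<^sup>2) * L"
    using \<mu> \<omega> by (intro mult_left_mono) auto
  then have "D \<le> (1 + \<omega>\<^sup>2) * L"
    by (simp add: D_def algebra_simps)
  moreover have "0 < D"
    unfolding D_def using \<mu> \<omega> by (intro add_pos_nonneg) auto
  ultimately have D: "0 < D" "D \<le> (1 + \<omega>\<^sup>2) * L"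
    by simp_all
  have m: "0 < m" "m\<^sup>2 \<le> \<omega>\<^sup>2"
    using ab \<mu> \<omega> by (simp_all add: m_def power_mono)
  have "(1 + \<omega>\<^sup>2) * \<omega> \<le> 3 / 2 * 1"
    using \<omega> \<omega>1 by (intro mult_mono) auto
  then have "\<eta> * ((1 + \<omega>\<^sup>2) * \<omega>) \<le> \<eta> * (3 / 2 * 1)"
    using \<eta>(1) by (rule mult_left_mono)
  also have "\<dots> \<le> c\<^sup>2 * (2 * (1 - \<omega>\<^sup>2))"
    using \<eta> \<omega> mult_left_mono[of 1 "2 * (1 - \<omega>\<^sup>2)" "c\<^sup>2"] by simp
  finally have key: "\<eta> * ((1 + \<omega>\<^sup>2) * \<omega>) \<le> c\<^sup>2 * (2 * (1 - \<omega>\<^sup>2))" .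
  have "L\<^sup>2 * \<eta> * (D * m\<^sup>2) \<le> L\<^sup>2 * \<eta> * ((1 + \<omega>\<^sup>2) * L * \<omega>\<^sup>2)"
    using D m \<eta> by (intro mult_left_mono mult_mono) auto
  also have "\<dots> = L^3 * \<omega> * (\<eta> * ((1 + \<omega>\<^sup>2) * \<omega>))"
    by (simp add: power2_eq_square power3_eq_cube algebra_simps)
  also have "\<dots> \<le> L^3 * \<omega> * (c\<^sup>2 * (2 * (1 - \<omega>\<^sup>2)))"
    using key \<mu> \<omega> by (intro mult_left_mono) auto
  also have "\<dots> = 2 * c\<^sup>2 * (1 - \<omega>\<^sup>2) * \<omega> * L^3"
    by (simp add: algebra_simps)
  finally have "sqrt (L\<^sup>2 * \<eta>) \<le> sqrt (2 * c\<^sup>2 * (1 - \<omega>\<^sup>2) * \<omega> * L^3 / (D * m\<^sup>2))"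
    using D m by (intro real_sqrt_le_mono) (simp add: le_divide_eq mult_ac)
  then show ?thesis
    using \<mu> m by (simp add: D_def m_def real_sqrt_divide real_sqrt_mult)
qed

theorem theorem4p7:
  fixes f :: "'a::euclidean_space \<Rightarrow> real"
    and g :: "'a \<Rightarrow> 'a"
    and x :: "nat \<Rightarrow> 'a"
    and \<alpha> \<theta> \<gamma> :: "nat \<Rightarrow> real"
    and \<tau> \<omega> \<gamma>min \<gamma>max R LW \<epsilon> :: real
  assumes conv: "convex_on UNIV f"
    and grad: "\<And>z. (f has_derivative (\<lambda>h. g z \<bullet> h)) (at z)"
    and grad_cont: "continuous_on UNIV g"
    and lsc: "loc_strongly_convex f g"
    and llip: "loc_lipschitz g"
    and nonempty: "argmin_set f \<noteq> {}"
    and alpha0: "\<alpha> 0 > 0" and theta0: "\<theta> 0 > 0"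
    and tau: "\<tau> > 1"
    and omega: "0 < \<omega>" "\<omega> \<le> 1 / sqrt 2"
    and gamma_bounds: "0 < \<gamma>min" "\<gamma>min \<le> \<gamma>max" "\<And>k. \<gamma> k \<in> {\<gamma>min..\<gamma>max}"
    and x_rec: "\<And>k. x (Suc k) = x k - (\<alpha> k * \<gamma> k) *\<^sub>R g (x k)"
    and alpha_rec: "\<And>k. \<alpha> (Suc k) =
          adasga_alpha_next \<omega> \<tau> (\<alpha> k) (\<gamma> k) (\<theta> k) (\<gamma> (Suc k)) (adasga_L g x (Suc k))"
    and theta_rec: "\<And>k. \<theta> (Suc k) = \<alpha> (Suc k) * \<gamma> (Suc k) / (\<alpha> k * \<gamma> k)"
    and R: "R > 3 * sqrt ((infdist (x 0) (argmin_set f))\<^sup>2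
              + 2 * (\<alpha> 0)\<^sup>2 * (\<gamma> 0)\<^sup>2 * (norm (g (x 0)))\<^sup>2
              + 2 * \<alpha> 0 * \<gamma> 0 * \<theta> 0 * (f (x 0) - opt_val f)) 
             + infdist (x 0) (argmin_set f) + norm (x 0)"
    and LW: "LW > 0" "LW-lipschitz_on (cball 0 R) g"
    and eps: "\<epsilon> > 0"
  shows "let fstar = opt_val f; X = argmin_set f; W = cball (0::'a) R;
             \<eta> = (infdist (x 0) X)\<^sup>2 + 2 * (\<alpha> 0)\<^sup>2 * (\<gamma> 0)\<^sup>2 * (norm (g (x 0)))\<^sup>2
                 + 2 * \<alpha> 0 * \<gamma> 0 * \<theta> 0 * (f (x 0) - fstar);
             \<mu>W = Inf {(g y - g z) \<bullet> (y - z) / (norm (y - z))\<^sup>2 | y z. y \<in> W \<and> z \<in> W \<and> y \<noteq> z};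
             m = min (\<alpha> 0 * \<gamma> 0 * \<mu>W / \<omega>) (\<mu>W / LW);
             q = min (min (\<mu>W / 2 * min (\<alpha> 0 * \<gamma> 0) (\<omega> / LW))
                          (\<mu>W * (1 - \<omega>\<^sup>2) / (2 * \<omega>^3 * LW + \<mu>W * (1 - \<omega>\<^sup>2))))
                     ((\<tau> - 1) * m / (\<tau> * (2 * (1 - \<omega>\<^sup>2) + m)));
             c1 = sqrt ((R + norm (x 0))\<^sup>2 + \<eta>);
             c2 = \<omega> * LW\<^sup>2 * c1\<^sup>2 / (\<mu>W * min ((\<alpha> 0)\<^sup>2 * (\<gamma> 0)\<^sup>2 * LW\<^sup>2) (\<omega>\<^sup>2));
             c3 = sqrt (2 * c1\<^sup>2 * (1 - \<omega>\<^sup>2) * \<omega> * LW^3)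
                  / (sqrt (2 * \<omega>\<^sup>2 * LW + (1 - \<omega>\<^sup>2) * \<mu>W) * min (\<alpha> 0 * \<gamma> 0 * LW) \<omega>)
         in \<exists>xs\<in>X.
              ((\<exists>k. norm (x k - xs) \<le> \<epsilon>) \<and>
                 (LEAST k. norm (x k - xs) \<le> \<epsilon>) \<le> nat (Mbound \<epsilon> c1 (sqrt (1 - q)))) \<and>
              ((\<exists>k. f (x k) - fstar \<le> \<epsilon>) \<and>
                 (LEAST k. f (x k) - fstar \<le> \<epsilon>) \<le> nat (Mbound \<epsilon> c2 (1 - q))) \<and>
              ((\<exists>k. norm (g (x k)) \<le> \<epsilon>) \<and>
                 (LEAST k. norm (g (x k)) \<le> \<epsilon>) \<le> nat (Mbound \<epsilon> c3 (sqrt (1 - q))))"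
proof -
  have gamma_pos: "\<gamma> k > 0" for k
    using gamma_bounds by (meson atLeastAtMost_iff less_le_trans)
  interpret adasga f g x \<alpha> \<theta> \<gamma> \<tau> \<omega>
    using conv grad alpha0 theta0 tau omega gamma_pos x_rec alpha_rec theta_rec by unfold_locales
  have "continuous_on UNIV f"
    using grad by (meson continuous_at_imp_continuous_on has_derivative_continuous)
  then obtain xs where xs: "xs \<in> argmin_set f" "infdist (x 0) (argmin_set f) = norm (x 0 - xs)"
    using infdist_attains_inf[OF closed_argmin_set nonempty, of "x 0"] by (auto simp: dist_norm)
  define \<eta> where "\<eta> = (infdist (x 0) (argmin_set f))\<^sup>2
    + 2 * (\<alpha> 0)\<^sup>2 * (\<gamma> 0)\<^sup>2 * (norm (g (x 0)))\<^sup>2 + 2 * \<alpha> 0 * \<gamma> 0 * \<theta> 0 * (f (x 0) - opt_val f)"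
  have E0: "energy xs 0 \<le> \<eta>"
    using energy_0_le[OF xs(1)] by (simp add: \<eta>_def xs(2) opt_val_eq_argmin[OF xs(1)])
  have \<eta>: "0 \<le> \<eta>"
    by (meson E0 dist_sq_le_energy[OF xs(1)] order_trans zero_le_power2)
  have "norm xs \<le> norm (x 0) + norm (x 0 - xs)"
    using norm_triangle_ineq4[of "x 0" "x 0 - xs"] by simp
  then have radius: "norm xs + sqrt \<eta> \<le> R" and R_pos: "0 < R"
    using R[folded \<eta>_def, unfolded xs(2)] real_sqrt_ge_zero[OF \<eta>] norm_ge_zero[of xs]
    by linarith+
  have "norm xs + sqrt (energy xs 0) \<le> R"
    using radius real_sqrt_le_mono[OF E0] by linarith
  then have ball: "cball xs (sqrt (energy xs 0)) \<subseteq> cball 0 R"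
    by (subst cball_subset_cball_iff) simp
  have "\<eta> \<le> R\<^sup>2"
    using radius norm_ge_zero[of xs] by (intro sqrt_le_D) linarith
  moreover have "R\<^sup>2 \<le> (R + norm (x 0))\<^sup>2"
    using R_pos by (intro power_mono) auto
  ultimately have c1_sq: "2 * \<eta> \<le> (sqrt ((R + norm (x 0))\<^sup>2 + \<eta>))\<^sup>2"
    using \<eta> by simp
  obtain e :: 'a where e: "norm e = 1"
    using norm_Basis SOME_Basis by blast
  define \<mu>W where "\<mu>W = monotonicity_modulus g (cball 0 R)"
  have "0 \<in> cball 0 R" "R *\<^sub>R e \<in> cball 0 R" "0 \<noteq> R *\<^sub>R e"
    using R_pos e by auto
  note \<mu>W = monotonicity_modulus_bounds[OF lsc compact_cball convex_cball LW(2) this, folded \<mu>W_def]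
  interpret adasga_local f g x \<alpha> \<theta> \<gamma> \<tau> \<omega> xs "cball 0 R" LW \<mu>W
    by unfold_locales (fact xs(1) convex_cball ball LW \<mu>W)+
  define q where "q = min (min (\<mu>W / 2 * min (\<alpha> 0 * \<gamma> 0) (\<omega> / LW))
                          (\<mu>W * (1 - \<omega>\<^sup>2) / (2 * \<omega>^3 * LW + \<mu>W * (1 - \<omega>\<^sup>2))))
                     ((\<tau> - 1) * min (\<alpha> 0 * \<gamma> 0 * \<mu>W / \<omega>) (\<mu>W / LW)
                        / (\<tau> * (2 * (1 - \<omega>\<^sup>2) + min (\<alpha> 0 * \<gamma> 0 * \<mu>W / \<omega>) (\<mu>W / LW))))"
  define c1 where "c1 = sqrt ((R + norm (x 0))\<^sup>2 + \<eta>)"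
  have "\<omega>\<^sup>2 < 1"
    using omega_sq_le by simp
  note q = adasga_rate_bounds[OF mu_pos LW(1) step_pos[of 0, unfolded step_def] omega(1) this tau q_def,
      folded step_def]
  note c2 = adasga_gap_constant_bound[OF mu_pos \<mu>W(2) omega(1) omega_sq_le alpha0 gamma_pos \<eta>
      c1_sq[folded c1_def]]
  note c3 = adasga_gradient_constant_bound[OF mu_pos \<mu>W(2) omega(1) omega_sq_le alpha0 gamma_pos \<eta>
      c1_sq[folded c1_def]]
  have "sqrt \<eta> \<le> c1"
    by (simp add: c1_def)
  note hit = hitting_times[OF q eps E0 this c2 c3, unfolded opt_val_eq_argmin[OF xs(1), symmetric]]
  show ?thesis
    unfolding Let_def using xs(1) hit unfolding q_def c1_def \<mu>W_def monotonicity_modulus_def \<eta>_def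
    by blast
qed

end
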